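(* Let $A\in\mathbb{R}^{n\times n}$ and $B_u\in\mathbb{R}^{n\times l}$ be given, and let data samples $d_i=\begin{bmatrix}\hat x_i^\top & u_i^\top & \hat\eta_i^\top\end{bmatrix}^\top$, $i=1,\dots,N$, with $\hat x_i\in\mathbb{R}^n$, $u_i\in\mathbb{R}^l$, $\hat\eta_i\in\mathbb{R}^n$, be given. Let $D=\sum_{i=1}^N d_id_i^\top$ and let $\tilde D$ be a matrix with $D=\tilde D^\top\tilde D$ (e.g. a Cholesky factor). Consider the semidefinite program in the variables $P=P^\top\in\mathbb{R}^{n\times n}$, $S\in\mathbb{R}^{n\times n}$, $R\in\mathbb{R}^{n\times l}$, $W=W^\top\in\mathbb{R}^{n\times n}$: $$\min_{P,S,R,W}\ \operatorname{tr}(W)\quad\text{s.t.}\quad A^\top P+PA+S^\top+S\prec 0,\qquad \begin{bmatrix}2P & \tilde T\tilde D^\top & I\\ \star & I & 0\\ \star & \star & W\end{bmatrix}\succeq 0,\qquad P\succ 0,$$ where $\tilde T:=\begin{bmatrix} S & R & -P\end{bmatrix}$ and $\star$ denotes the blocks determined by symmetry. Let $(P^\star,S^\star,R^\star,W^\star)$ be an optimizer of this program. Set $S_{\eta_l}=I_n$, $\Theta_l=\Theta_l^\star:=(P^\star)^{-1}S^\star$ and $B_l=B_l^\star:=(P^\star)^{-1}R^\star$. Then the model $$\dot x=Ax+B_uu+S_{\eta_l}(\Theta_l x+B_l u)$$ is asymptotically stable (for $u=0$), i.e. $A+S_{\eta_l}\Theta_l^\star$ is Hurwitz, with $V(x)=x^\top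 P^\star x$ a Lyapunov function satisfying $(A+\Theta_l^\star)^\top P^\star+P^\star(A+\Theta_l^\star)\prec 0$. Moreover, the cost $$J=\sum_{i=1}^N e_i^\top e_i,\qquad e_i:=\Theta_l^\star\hat x_i+B_l^\star u_i-\hat\eta_i,$$ satisfies $J\le \operatorname{tr}(W^\star)$.
   Context: Setting: one seeks a linear uncertainty model $\eta_l(x,u)=\Theta_lx+B_lu$ to augment the known linear model $\dot x=Ax+B_uu$ as $\dot x=Ax+B_uu+S_{\eta_l}\eta_l(x,u)$, fitted to data $(\hat x_i,u_i,\hat\eta_i)$ (estimates of state, input, and uncertainty) by the quadratic cost $J=\sum_i e_i^\top e_i=\sum_i d_i^\top T^\top T d_i$ with $T=[\Theta_l\ \ B_l\ \ -I]$ and $e_i=Td_i$. Note $J=\operatorname{tr}(TDT^\top)$. A matrix is Hurwitz if all its eigenvalues have negative real part. *)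

theory Defs
  imports "HOL-Analysis.Analysis"
begin

definition sym_mat :: "real^'n^'n \<Rightarrow> bool" where
  "sym_mat M \<longleftrightarrow> transpose M = M"

definition pos_def :: "real^'n^'n \<Rightarrow> bool" where
  "pos_def M \<longleftrightarrow> sym_mat M \<and> (\<forall>x. x \<noteq> 0 \<longrightarrow> x \<bullet> (M *v x) > 0)"

definition neg_def :: "real^'n^'n \<Rightarrow> bool" where
  "neg_def M \<longleftrightarrow> sym_mat M \<and> (\<forall>x. x \<noteq> 0 \<longrightarrow> x \<bullet> (M *v x) < 0)"

definition pos_semidef :: "real^'n^'n \<Rightarrow> bool" where
  "pos_semidef M \<longleftrightarrow> sym_mat M \<and> (\<forall>x. x \<bullet> (M *v x) \<ge> 0)"

definition hurwitz :: "real^'n^'n \<Rightarrow> bool" where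
  "hurwitz M \<longleftrightarrow> (\<forall>z::complex. det (mat z - map_matrix complex_of_real M) = 0 \<longrightarrow> Re z < 0)"

definition outer_prod :: "real^'m \<Rightarrow> real^'n \<Rightarrow> real^'n^'m" where
  "outer_prod x y = (\<chi> i j. x $ i * y $ j)"

definition stack3 :: "real^'n \<Rightarrow> real^'l \<Rightarrow> real^'n \<Rightarrow> real^('n + ('l + 'n))" where
  "stack3 x u e = (\<chi> j. case j of Inl a \<Rightarrow> x $ a | Inr (Inl b) \<Rightarrow> u $ b | Inr (Inr c) \<Rightarrow> e $ c)"

definition hblock3 :: "real^'n^'m \<Rightarrow> real^'l^'m \<Rightarrow> real^'n^'m \<Rightarrow> real^('n + ('l + 'n))^'m" where
  "hblock3 X Y Z = (\<chi> i j. case j of Inl a \<Rightarrow> X $ i $ a | Inr (Inl b) \<Rightarrow> Y $ i $ b | Inr (Inr c) \<Rightarrow> Z $ i $ c)"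

definition symblock3 ::
  "real^'a^'a \<Rightarrow> real^'b^'a \<Rightarrow> real^'c^'a \<Rightarrow> real^'b^'b \<Rightarrow> real^'c^'b \<Rightarrow> real^'c^'c
   \<Rightarrow> real^('a + ('b + 'c))^('a + ('b + 'c))" where
  "symblock3 M11 M12 M13 M22 M23 M33 = (\<chi> i j.
     case i of
       Inl p \<Rightarrow> (case j of Inl q \<Rightarrow> M11 $ p $ q | Inr (Inl q) \<Rightarrow> M12 $ p $ q | Inr (Inr q) \<Rightarrow> M13 $ p $ q)
     | Inr (Inl p) \<Rightarrow> (case j of Inl q \<Rightarrow> M12 $ q $ p | Inr (Inl q) \<Rightarrow> M22 $ p $ q | Inr (Inr q) \<Rightarrow> M23 $ p $ q)
     | Inr (Inr p) \<Rightarrow> (case j of Inl q \<Rightarrow> M13 $ q $ p | Inr (Inl q) \<Rightarrow> M23 $ q $ p | Inr (Inr q) \<Rightarrow> M33 $ p $ q))"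

definition sdp_feasible ::
  "real^'n^'n \<Rightarrow> real^('n + ('l + 'n))^'k \<Rightarrow> real^'n^'n \<Rightarrow> real^'n^'n \<Rightarrow> real^'l^'n \<Rightarrow> real^'n^'n \<Rightarrow> bool" where
  "sdp_feasible A Dt P S R W \<longleftrightarrow>
     sym_mat P \<and> sym_mat W \<and>
     neg_def (transpose A ** P + P ** A + transpose S + S) \<and>
     pos_semidef (symblock3 (2 *\<^sub>R P) (hblock3 S R (- P) ** transpose Dt) (mat 1)
                            (mat 1) 0 W) \<and>
     pos_def P"

definition sdp_optimal ::
  "real^'n^'n \<Rightarrow> real^('n + ('l + 'n))^'k \<Rightarrow> real^'n^'n \<Rightarrow> real^'n^'n \<Rightarrow> real^'l^'n \<Rightarrow> real^'n^'n \<Rightarrow> bool" where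
  "sdp_optimal A Dt P S R W \<longleftrightarrow> sdp_feasible A Dt P S R W \<and>
     (\<forall>P' S' R' W'. sdp_feasible A Dt P' S' R' W' \<longrightarrow> trace W \<le> trace W')"

end

theory Submission
  imports Defs
begin

text \<open>
  With \<open>S = P \<Theta>\<close> and \<open>R = P B\<close>, the first LMI is literally the Lyapunov inequality for
  \<open>A + \<Theta>\<close>, and a Lyapunov pair (\<open>P\<close> positive definite, \<open>M\<^sup>T P + P M\<close> negative definite)
  forces every eigenvalue of \<open>M\<close> into the open left half plane: test the inequality on the
  real and imaginary parts of a complex eigenvector. Testing the second LMI on the vector
  \<open>(- P\<^sup>-\<^sup>1 e, C\<^sup>T P\<^sup>-\<^sup>1 e, e)\<close>, where \<open>C = T Dt\<^sup>T\<close>, gives \<open>|C\<^sup>T P\<^sup>-\<^sup>1 e|\<^sup>2 \<le> e\<^sup>T W e\<close>. Summing over the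
  unit vectors \<open>e\<close> and using \<open>Dt\<^sup>T Dt = \<Sum>\<^sub>i d\<^sub>i d\<^sub>i\<^sup>T\<close> turns the left side into
  \<open>\<Sum>\<^sub>i |P\<^sup>-\<^sup>1 T d\<^sub>i|\<^sup>2\<close>, which is the cost \<open>J\<close>.
\<close>

lemma inner_matrix_vector_transpose:
  "(x::real^'n) \<bullet> (M *v y) = (transpose M *v x) \<bullet> y"
  by (metis dot_lmul_matrix transpose_matrix_vector)

lemma transpose_add: "transpose (A + B) = transpose A + transpose (B::'a::plus^'n^'m)"
  by (simp add: vec_eq_iff transpose_def)

lemma transpose_uminus: "transpose (- A) = - transpose (A::'a::uminus^'n^'m)"
  by (simp add: vec_eq_iff transpose_def)

lemma matrix_add_rdistrib: "(A + B) ** C = A ** C + B ** (C::'a::semiring_1^'k^'n)"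
  by (simp add: vec_eq_iff matrix_matrix_mult_def sum.distrib distrib_right)

lemma matrix_vector_mult_uminus_left: "(- A) *v x = - (A *v (x::'a::ring_1^'n))"
  by (simp add: vec_eq_iff matrix_vector_mult_def sum_negf)

lemma matrix_vector_mult_uminus_right: "A *v (- x) = - (A *v (x::'a::ring_1^'n))"
  by (simp add: vec_eq_iff matrix_vector_mult_def sum_negf)

lemma matrix_vector_mult_sum_left: "sum f I *v (y::'a::semiring_1^'n) = (\<Sum>i\<in>I. f i *v y)"
  by (induct I rule: infinite_finite_induct) (simp_all add: matrix_vector_mult_add_rdistrib)

lemma matrix_inv_right: "invertible P \<Longrightarrow> P ** matrix_inv P = mat 1"
  and matrix_inv_left: "invertible P \<Longrightarrow> matrix_inv P ** P = mat 1"
  unfolding invertible_def matrix_inv_def by (metis (mono_tags, lifting) someI_ex)+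

lemma matrix_inv_right_vector: "invertible P \<Longrightarrow> P *v (matrix_inv P *v x) = x"
  and matrix_inv_left_vector: "invertible P \<Longrightarrow> matrix_inv P *v (P *v x) = x"
  by (simp_all add: matrix_vector_mul_assoc matrix_inv_right matrix_inv_left)

lemma transpose_matrix_inv_sym:
  fixes P :: "real^'n^'n"
  assumes "invertible P" "transpose P = P"
  shows "transpose (matrix_inv P) = matrix_inv P"
proof -
  have "transpose (matrix_inv P) = transpose (matrix_inv P) ** (P ** matrix_inv P)"
    by (simp add: matrix_inv_right[OF assms(1)])
  also have "\<dots> = transpose (P ** matrix_inv P) ** matrix_inv P"
    by (metis matrix_mul_assoc matrix_transpose_mul assms(2))
  finally show ?thesis by (simp add: matrix_inv_right[OF assms(1)])
qed

lemma pos_def_quadratic_nonneg: "pos_def P \<Longrightarrow> 0 \<le> x \<bullet> (P *v x)"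
  unfolding pos_def_def by (cases "x = 0") (auto intro: less_imp_le)

lemma pos_def_quadratic_sum_pos:
  assumes "pos_def P" "a \<noteq> 0 \<or> b \<noteq> 0"
  shows "0 < a \<bullet> (P *v a) + b \<bullet> (P *v b)"
  using assms pos_def_quadratic_nonneg[OF assms(1)] unfolding pos_def_def
  by (metis add_pos_nonneg add_nonneg_pos)

lemma neg_def_iff_pos_def_uminus: "neg_def M \<longleftrightarrow> pos_def (- M)"
  by (auto simp: neg_def_def pos_def_def sym_mat_def transpose_uminus
      matrix_vector_mult_uminus_left)

lemma pos_def_invertible:
  fixes P :: "real^'n^'n"
  assumes "pos_def P"
  shows "invertible P"
proof -
  have "P *v x = 0 \<Longrightarrow> x = 0" for x
    using assms unfolding pos_def_def by (metis inner_zero_right less_irrefl)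
  then show ?thesis
    using matrix_left_invertible_ker invertible_left_inverse by blast
qed

lemma lyapunov_quadratic_form:
  fixes P M :: "real^'n^'n"
  assumes "transpose P = P"
  shows "x \<bullet> ((transpose M ** P + P ** M) *v x) = 2 * ((P *v x) \<bullet> (M *v x))"
proof -
  have "x \<bullet> ((transpose M ** P) *v x) = (M *v x) \<bullet> (P *v x)"
    by (metis inner_matrix_vector_transpose matrix_vector_mul_assoc transpose_transpose)
  moreover have "x \<bullet> ((P ** M) *v x) = (P *v x) \<bullet> (M *v x)"
    by (metis inner_matrix_vector_transpose matrix_vector_mul_assoc assms)
  ultimately show ?thesis
    by (simp add: matrix_vector_mult_add_rdistrib inner_add_right inner_commute)
qed

lemma complex_eigenvector_real_parts:
  fixes M :: "real^'n^'n"
  assumes "det (mat z - map_matrix complex_of_real M) = 0"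
  obtains a b where "a \<noteq> 0 \<or> b \<noteq> 0"
    and "M *v a = Re z *\<^sub>R a - Im z *\<^sub>R b" and "M *v b = Im z *\<^sub>R a + Re z *\<^sub>R b"
proof -
  obtain v where "v \<noteq> 0" and v: "(mat z - map_matrix complex_of_real M) *v v = 0"
    using assms invertible_det_nz matrix_left_invertible_ker invertible_left_inverse by blast
  define a where "a = (\<chi> i. Re (v $ i))"
  define b where "b = (\<chi> i. Im (v $ i))"
  have eigen: "z * v $ i = (\<Sum>j\<in>UNIV. complex_of_real (M $ i $ j) * v $ j)" for i
  proof -
    have "((mat z - map_matrix complex_of_real M) *v v) $ i = 0" using v by simp
    then show ?thesis
      by (simp add: matrix_vector_mult_def mat_def sum_subtractf left_diff_distrib
          if_distrib[of "\<lambda>x. x * _"] cong: if_cong)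
  qed
  have "a \<noteq> 0 \<or> b \<noteq> 0"
    using \<open>v \<noteq> 0\<close> by (auto simp: a_def b_def vec_eq_iff complex_eq_iff)
  moreover have "M *v a = Re z *\<^sub>R a - Im z *\<^sub>R b"
    using arg_cong[OF eigen, of Re]
    by (simp add: vec_eq_iff a_def b_def matrix_vector_mult_def Re_sum)
  moreover have "M *v b = Im z *\<^sub>R a + Re z *\<^sub>R b"
    using arg_cong[OF eigen, of Im]
    by (simp add: vec_eq_iff a_def b_def matrix_vector_mult_def Im_sum algebra_simps)
  ultimately show ?thesis using that by blast
qed

lemma hurwitz_if_lyapunov:
  fixes P M :: "real^'n^'n"
  assumes P: "pos_def P" and L: "neg_def (transpose M ** P + P ** M)"
  shows "hurwitz M"
  unfolding hurwitz_def
proof (intro allI impI)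
  fix z :: complex
  assume "det (mat z - map_matrix complex_of_real M) = 0"
  then obtain a b where ab: "a \<noteq> 0 \<or> b \<noteq> 0"
    and Ma: "M *v a = Re z *\<^sub>R a - Im z *\<^sub>R b" and Mb: "M *v b = Im z *\<^sub>R a + Re z *\<^sub>R b"
    by (rule complex_eigenvector_real_parts)
  have sym: "transpose P = P" using P by (simp add: pos_def_def sym_mat_def)
  have cross: "(P *v b) \<bullet> a = (P *v a) \<bullet> b"
    by (metis sym inner_matrix_vector_transpose inner_commute)
  let ?L = "transpose M ** P + P ** M"
  have "a \<bullet> (?L *v a) + b \<bullet> (?L *v b) = 2 * Re z * (a \<bullet> (P *v a) + b \<bullet> (P *v b))"
    unfolding lyapunov_quadratic_form[OF sym] Ma Mb
    using cross by (simp add: inner_diff_right inner_add_right inner_commute algebra_simps)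
  moreover have "a \<bullet> (?L *v a) + b \<bullet> (?L *v b) < 0"
    using pos_def_quadratic_sum_pos[OF L[unfolded neg_def_iff_pos_def_uminus] ab]
    unfolding matrix_vector_mult_uminus_left inner_minus_right by linarith
  moreover have "0 < a \<bullet> (P *v a) + b \<bullet> (P *v b)"
    using pos_def_quadratic_sum_pos[OF P ab] .
  ultimately show "Re z < 0"
    by (smt (verit) mult_nonneg_nonneg)
qed

lemma lyapunov_feedback_matrix_inv:
  fixes A P S :: "real^'n^'n"
  assumes "invertible P" "transpose P = P"
  shows "transpose (A + matrix_inv P ** S) ** P + P ** (A + matrix_inv P ** S)
    = transpose A ** P + P ** A + transpose S + S"
proof -
  have "transpose (matrix_inv P ** S) ** P = transpose S"
    by (metis assms matrix_inv_left matrix_mul_assoc matrix_mul_rid matrix_transpose_mul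
        transpose_matrix_inv_sym)
  moreover have "P ** (matrix_inv P ** S) = S"
    by (metis assms(1) matrix_inv_right matrix_mul_assoc matrix_mul_lid)
  ultimately show ?thesis
    by (simp add: transpose_add matrix_add_rdistrib matrix_add_ldistrib algebra_simps)
qed

lemma sum_UNIV_Plus:
  "sum f (UNIV :: ('a::finite + 'b::finite) set) = sum (f \<circ> Inl) UNIV + sum (f \<circ> Inr) UNIV"
  by (metis UNIV_Plus_UNIV finite_class.finite_UNIV sum.Plus)

lemma inner_stack3: "stack3 a b e \<bullet> stack3 a' b' e' = a \<bullet> a' + b \<bullet> b' + e \<bullet> e'"
  by (simp add: inner_vec_def stack3_def sum_UNIV_Plus o_def)

lemma symblock3_mult_stack3:
  "symblock3 M11 M12 M13 M22 M23 M33 *v stack3 a b e =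
   stack3 (M11 *v a + M12 *v b + M13 *v e) (transpose M12 *v a + M22 *v b + M23 *v e)
          (transpose M13 *v a + transpose M23 *v b + M33 *v e)"
  by (auto simp: vec_eq_iff stack3_def symblock3_def matrix_vector_mult_def sum_UNIV_Plus
      transpose_def split: sum.split)

lemma hblock3_mult_stack3: "hblock3 X Y Z *v stack3 a b c = X *v a + Y *v b + Z *v c"
  by (simp add: vec_eq_iff hblock3_def stack3_def matrix_vector_mult_def sum_UNIV_Plus)

lemma symblock3_quadratic_form:
  fixes M11 :: "real^'a^'a"
  shows "stack3 a b e \<bullet> (symblock3 M11 M12 M13 M22 M23 M33 *v stack3 a b e) =
    a \<bullet> (M11 *v a) + 2 * (a \<bullet> (M12 *v b)) + 2 * (a \<bullet> (M13 *v e)) + b \<bullet> (M22 *v b)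
    + 2 * (b \<bullet> (M23 *v e)) + e \<bullet> (M33 *v e)"
  unfolding symblock3_mult_stack3 inner_stack3
  by (simp add: inner_add_right inner_commute[of _ "_ v* _"] dot_lmul_matrix)

lemma symblock3_pos_semidef_bound:
  fixes P W :: "real^'n^'n" and C :: "real^'k^'n"
  assumes P: "invertible P"
    and psd: "pos_semidef (symblock3 (2 *\<^sub>R P) C (mat 1) (mat 1) 0 W)"
  shows "(transpose C *v (matrix_inv P *v e)) \<bullet> (transpose C *v (matrix_inv P *v e))
    \<le> e \<bullet> (W *v e)"
proof -
  \<comment> \<open>Schur complement: on \<open>stack3 a b e\<close> the form reduces to \<open>e\<^sup>T W e - |b|\<^sup>2\<close>.\<close>
  define a where "a = - (matrix_inv P *v e)"
  define b where "b = transpose C *v (matrix_inv P *v e)"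
  have "0 \<le> stack3 a b e \<bullet> (symblock3 (2 *\<^sub>R P) C (mat 1) (mat 1) 0 W *v stack3 a b e)"
    using psd unfolding pos_semidef_def by blast
  also have "\<dots> = a \<bullet> ((2 *\<^sub>R P) *v a) + 2 * (a \<bullet> (C *v b)) + 2 * (a \<bullet> e)
      + b \<bullet> b + e \<bullet> (W *v e)"
    unfolding symblock3_quadratic_form by simp
  also have "a \<bullet> ((2 *\<^sub>R P) *v a) = 2 * ((matrix_inv P *v e) \<bullet> e)"
    unfolding a_def
    by (simp add: scaleR_matrix_vector_assoc[symmetric] matrix_vector_mult_uminus_right
        matrix_inv_right_vector[OF P])
  also have "a \<bullet> (C *v b) = - (b \<bullet> b)"
    unfolding a_def b_def inner_matrix_vector_transpose[of _ C]
    by (simp add: matrix_vector_mult_uminus_right)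
  also have "a \<bullet> e = - ((matrix_inv P *v e) \<bullet> e)"
    unfolding a_def by simp
  finally show ?thesis unfolding b_def by simp
qed

lemma outer_prod_mult_vector: "outer_prod x y *v v = (y \<bullet> v) *\<^sub>R x"
  by (simp add: vec_eq_iff outer_prod_def matrix_vector_mult_def inner_vec_def
      sum_distrib_left mult.commute mult.left_commute)

lemma gram_quadratic_form:
  assumes "transpose Dt ** Dt = (\<Sum>i\<in>I. outer_prod (d i) (d i))"
  shows "(Dt *v y) \<bullet> (Dt *v y) = (\<Sum>i\<in>I. (d i \<bullet> y)\<^sup>2)"
proof -
  have "(Dt *v y) \<bullet> (Dt *v y) = y \<bullet> ((transpose Dt ** Dt) *v y)"
    by (metis inner_matrix_vector_transpose matrix_vector_mul_assoc inner_commute)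
  also have "\<dots> = (\<Sum>i\<in>I. (d i \<bullet> y)\<^sup>2)"
    unfolding assms matrix_vector_mult_sum_left outer_prod_mult_vector
    by (simp add: inner_sum_right power2_eq_square inner_commute)
  finally show ?thesis .
qed

lemma sum_axis_gram_eq_sum_data:
  fixes M :: "real^'m^'n"
  assumes "transpose Dt ** Dt = (\<Sum>i\<in>I. outer_prod (d i) (d i))"
  shows "(\<Sum>j\<in>UNIV. (Dt *v (transpose M *v axis j 1)) \<bullet> (Dt *v (transpose M *v axis j 1)))
    = (\<Sum>i\<in>I. (M *v d i) \<bullet> (M *v d i))"
proof -
  have "d i \<bullet> (transpose M *v axis j 1) = (M *v d i) $ j" for i j
    by (metis inner_matrix_vector_transpose transpose_transpose inner_axis inner_real_def
        mult_1_right)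
  then have "(\<Sum>j\<in>UNIV. (Dt *v (transpose M *v axis j 1)) \<bullet> (Dt *v (transpose M *v axis j 1)))
      = (\<Sum>j\<in>UNIV. \<Sum>i\<in>I. ((M *v d i) $ j)\<^sup>2)"
    by (simp add: gram_quadratic_form[OF assms])
  also have "\<dots> = (\<Sum>i\<in>I. (M *v d i) \<bullet> (M *v d i))"
    unfolding inner_vec_def power2_eq_square inner_real_def by (rule sum.swap)
  finally show ?thesis .
qed

lemma trace_eq_sum_axis: "trace W = (\<Sum>j\<in>UNIV. axis j 1 \<bullet> (W *v axis j (1::real)))"
  by (simp add: trace_def matrix_vector_mul_component inner_axis inner_axis')

lemma sdp_feasible_lyapunov:
  assumes "sdp_feasible A Dt P S R W"
  shows "neg_def (transpose (A + matrix_inv P ** S) ** P + P ** (A + matrix_inv P ** S))"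
proof -
  have "pos_def P" using assms unfolding sdp_feasible_def by blast
  then have "invertible P" "transpose P = P"
    by (simp_all add: pos_def_invertible pos_def_def sym_mat_def)
  then show ?thesis
    using assms unfolding sdp_feasible_def by (simp add: lyapunov_feedback_matrix_inv)
qed

lemma sdp_feasible_cost_le_trace:
  assumes feasible: "sdp_feasible A Dt P S R W"
    and data: "transpose Dt ** Dt
      = (\<Sum>i\<in>I. outer_prod (stack3 (xh i) (u i) (eh i)) (stack3 (xh i) (u i) (eh i)))"
  shows "(\<Sum>i\<in>I. let e = (matrix_inv P ** S) *v xh i + (matrix_inv P ** R) *v u i - eh i
      in e \<bullet> e) \<le> trace W"
proof -
  let ?Q = "matrix_inv P"
  let ?T = "hblock3 S R (- P)"
  have P: "invertible P" "transpose P = P"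
    using feasible by (simp_all add: sdp_feasible_def pos_def_invertible pos_def_def sym_mat_def)
  have psd: "pos_semidef (symblock3 (2 *\<^sub>R P) (?T ** transpose Dt) (mat 1) (mat 1) 0 W)"
    using feasible unfolding sdp_feasible_def by blast
  have residual: "(?Q ** ?T) *v stack3 (xh i) (u i) (eh i)
      = (?Q ** S) *v xh i + (?Q ** R) *v u i - eh i" for i
    by (simp add: matrix_vector_mul_assoc[symmetric] hblock3_mult_stack3
        matrix_vector_mult_uminus_left matrix_inv_left_vector[OF P(1)] algebra_simps)
  have "transpose (?T ** transpose Dt) *v (?Q *v x) = Dt *v (transpose (?Q ** ?T) *v x)" for x
    by (simp add: matrix_transpose_mul transpose_matrix_inv_sym[OF P] matrix_vector_mul_assoc
        matrix_mul_assoc)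
  then have "(\<Sum>i\<in>I. ((?Q ** ?T) *v stack3 (xh i) (u i) (eh i))
      \<bullet> ((?Q ** ?T) *v stack3 (xh i) (u i) (eh i))) \<le> (\<Sum>j\<in>UNIV. axis j 1 \<bullet> (W *v axis j 1))"
    unfolding sum_axis_gram_eq_sum_data[OF data, symmetric]
    by (intro sum_mono) (metis symblock3_pos_semidef_bound[OF P(1) psd])
  then show ?thesis
    unfolding residual trace_eq_sum_axis Let_def .
qed

theorem theorem1:
  fixes A :: "real^'n^'n" and Bu :: "real^'l^'n"
    and xh :: "nat \<Rightarrow> real^'n" and u :: "nat \<Rightarrow> real^'l" and eh :: "nat \<Rightarrow> real^'n"
    and N :: nat
    and Dt :: "real^('n + ('l + 'n))^'k"
    and P S W :: "real^'n^'n" and R :: "real^'l^'n"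
  assumes "(\<Sum>i=1..N. outer_prod (stack3 (xh i) (u i) (eh i)) (stack3 (xh i) (u i) (eh i)))
             = transpose Dt ** Dt"
    and "sdp_optimal A Dt P S R W"
  shows "hurwitz (A + mat 1 ** (matrix_inv P ** S))
       \<and> pos_def P
       \<and> neg_def (transpose (A + matrix_inv P ** S) ** P + P ** (A + matrix_inv P ** S))
       \<and> (\<Sum>i=1..N. let e = (matrix_inv P ** S) *v xh i + (matrix_inv P ** R) *v u i - eh i
                     in e \<bullet> e) \<le> trace W"
proof -
  have feasible: "sdp_feasible A Dt P S R W"
    using assms(2) unfolding sdp_optimal_def by blast
  then have P: "pos_def P"
    unfolding sdp_feasible_def by blast
  have lyapunov: "neg_def (transpose (A + matrix_inv P ** S) ** P + P ** (A + matrix_inv P ** S))"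
    using sdp_feasible_lyapunov[OF feasible] .
  show ?thesis
    using hurwitz_if_lyapunov[OF P lyapunov] P lyapunov
      sdp_feasible_cost_le_trace[OF feasible assms(1)[symmetric]]
    by simp
qed

end
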